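(* Let $\alpha\in\mathcal{L}^*(E_{\mathbb{Z}})$ with $|\alpha|\ge2$. Then there exists $n\ge0$ such that $$\alpha=\gamma_0\, i_1^{(n)}\cdots i_k^{(n)}\,\gamma_1,\qquad 2\le k\le 4,\ i_1,\dots,i_k\in\{0,1\},$$ where $\gamma_0$ is a final subpath (suffix) of $0^{(n)}$ or of $1^{(n)}$ and $\gamma_1$ is an initial subpath (prefix) of $0^{(n)}$ or of $1^{(n)}$, with $0\le|\gamma_0|,|\gamma_1|<2^n$ ($n$ need not be unique). Moreover, for a fixed such $n$, this expression of $\alpha$ in $i^{(n)}$-blocks is unique.
   Context: The two-sided Thue--Morse sequence $\omega=(\omega_k)_{k\in\mathbb{Z}}$ over $\{0,1\}$ is defined by $\omega_0=0$, $\omega_{2^n+j}=1-\omega_j$ for $n\ge0$, $0\le j<2^n$, and $\omega_{-i}=\omega_{i-1}$ for $i\ge1$. $\mathcal{L}^*(E_{\mathbb{Z}})$ denotes the set of finite nonempty words occurring in $\omega$. Blocks $i^{(n)}$: $0^{(0)}=0$, $1^{(0)}=1$, and inductively $0^{(n)}=0^{(n-1)}1^{(n-1)}$, $1^{(n)}=1^{(n-1)}0^{(n-1)}$ (concatenation); $|i^{(n)}|=2^n$. Empty $\gamma_0,\gamma_1$ are allowed. *)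

theory Defs
  imports Main "HOL-Library.Sublist"
begin

definition top_pow :: "nat \<Rightarrow> nat" where
  "top_pow k = (GREATEST n. (2::nat) ^ n \<le> k)"

text \<open>One-sided Thue--Morse: omega_0 = 0 and omega_(2^n+j) = 1 - omega_j for 0 \<le> j < 2^n,
  where for k \<ge> 1 we write k = 2^n + j with n = top_pow k.\<close>
function tm_nat :: "nat \<Rightarrow> nat" where
  "tm_nat k = (if k = 0 then 0 else 1 - tm_nat (k - 2 ^ top_pow k))"
  by auto
termination
  by (relation "measure id") auto

definition tm_omega :: "int \<Rightarrow> nat" where
  "tm_omega k = (if 0 \<le> k then tm_nat (nat k) else tm_nat (nat (- k) - 1))"

definition tm_lang :: "nat list set" where
  "tm_lang = {w. w \<noteq> [] \<and> (\<exists>m::int. \<forall>j < length w. w ! j = tm_omega (m + int j))}"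

fun tm_block :: "nat \<Rightarrow> nat \<Rightarrow> nat list" where
  "tm_block 0 i = [i]"
| "tm_block (Suc n) i = tm_block n i @ tm_block n (1 - i)"

definition block_decomp :: "nat \<Rightarrow> nat list \<Rightarrow> nat list \<Rightarrow> nat list \<Rightarrow> nat list \<Rightarrow> bool" where
  "block_decomp n \<alpha> g0 is g1 \<longleftrightarrow>
     2 \<le> length is \<and> length is \<le> 4 \<and> set is \<subseteq> {0, 1} \<and>
     (\<exists>i\<in>{0,1}. suffix g0 (tm_block n i)) \<and>
     (\<exists>i\<in>{0,1}. prefix g1 (tm_block n i)) \<and>
     length g0 < 2 ^ n \<and> length g1 < 2 ^ n \<and>
     \<alpha> = g0 @ concat (map (\<lambda>i. tm_block n i) is) @ g1"

end

theory Submission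
  imports Defs
begin

text \<open>For every \<open>n\<close>, the two-sided Thue--Morse word is the concatenation of the blocks
  \<open>0\<^sup>(\<^sup>n\<^sup>)\<close> and \<open>1\<^sup>(\<^sup>n\<^sup>)\<close> placed at the positions divisible by \<open>2^n\<close>.
  A window is decomposed by choosing \<open>n\<close> so that it contains between two and four complete
  aligned \<open>2^n\<close>-blocks; such an \<open>n\<close> exists because the number of complete blocks roughly halves
  when \<open>n\<close> increases. Uniqueness is recognizability: two consecutive \<open>n\<close>-blocks occur only at
  positions divisible by \<open>2^n\<close>, which determines \<open>|\<gamma>\<^sub>0|\<close> modulo \<open>2^n\<close> and hence outright.\<close>

declare tm_nat.simps[simp del]

lemma top_pow_eq: "2^t \<le> k \<Longrightarrow> k < 2^(t+1) \<Longrightarrow> top_pow k = t"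
  unfolding top_pow_def
proof (rule Greatest_equality)
  fix y assume "2^t \<le> k" "k < 2^(t+1)" "(2::nat)^y \<le> k"
  then have "(2::nat)^y < 2^(t+1)" by linarith
  then show "y \<le> t" using power_less_imp_less_exp[of "2::nat" y "t+1"] by simp
qed

lemma tm_nat_0: "tm_nat 0 = 0"
  by (subst tm_nat.simps) simp

lemma tm_nat_pos: "0 < k \<Longrightarrow> tm_nat k = 1 - tm_nat (k - 2 ^ top_pow k)"
  by (subst tm_nat.simps) simp

lemma tm_nat_le1: "tm_nat k \<le> 1"
  by (subst tm_nat.simps) simp

lemma tm_nat_double: "tm_nat (2*k) = tm_nat k \<and> tm_nat (2*k+1) = 1 - tm_nat k"
proof (induction k rule: less_induct)
  case (less k)
  show ?case
  proof (cases "k = 0")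
    case True
    have "top_pow 1 = 0" by (rule top_pow_eq) auto
    then show ?thesis using True by (simp add: tm_nat_pos tm_nat_0)
  next
    case False
    then obtain t where t: "2^t \<le> k" "k < 2^(t+1)" using ex_power_ivl1[of 2 k] by auto
    then have "top_pow k = t" "top_pow (2*k) = t+1" "top_pow (2*k+1) = t+1"
      by (auto intro: top_pow_eq)
    moreover have "2*k - 2^(t+1) = 2*(k-2^t)" "2*k+1 - 2^(t+1) = 2*(k-2^t)+1"
      using t by simp_all
    ultimately have "tm_nat k = 1 - tm_nat (k - 2^t)"
      "tm_nat (2*k) = 1 - tm_nat (2*(k-2^t))" "tm_nat (2*k+1) = 1 - tm_nat (2*(k-2^t)+1)"
      using False by (simp_all add: tm_nat_pos)
    moreover have "k - 2^t < k" using t False by simp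
    ultimately show ?thesis using less.IH tm_nat_le1[of "k - 2^t"] by auto
  qed
qed

lemma one_minus_neq_self: "1 - (x::nat) \<noteq> x"
  by (cases x) auto

subsection \<open>Sequences that are iterated images of the Thue--Morse substitution\<close>

text \<open>\<open>tm_image s\<close> says that \<open>s\<close> is the image under \<open>0 \<mapsto> 01, 1 \<mapsto> 10\<close> of
  \<open>\<lambda>z. s (2*z)\<close>, the blocks being aligned at even positions.\<close>
definition tm_image :: "(int \<Rightarrow> nat) \<Rightarrow> bool" where
  "tm_image s \<longleftrightarrow> (\<forall>z. s (2*z) \<le> 1 \<and> s (2*z+1) = 1 - s (2*z))"

definition tm_iterated_image :: "(int \<Rightarrow> nat) \<Rightarrow> bool" where
  "tm_iterated_image s \<longleftrightarrow> (\<forall>n. tm_image (\<lambda>z. s (2^n * z)))"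

lemma tm_image_le1:
  assumes "tm_image s" shows "s x \<le> 1"
proof -
  obtain z where "x = 2*z \<or> x = 2*z+1" by (metis evenE oddE)
  then show ?thesis using assms unfolding tm_image_def by auto
qed

lemma tm_image_odd: "tm_image s \<Longrightarrow> s (2*z+1) = 1 - s (2*z)"
  unfolding tm_image_def by blast

lemma tm_image_pair_neq: "tm_image s \<Longrightarrow> s (2*z) \<noteq> s (2*z+1)"
  unfolding tm_image_def using one_minus_neq_self by metis

lemma tm_iterated_image_decimate:
  "tm_iterated_image s \<Longrightarrow> tm_iterated_image (\<lambda>z. s (2^n * z))"
  unfolding tm_iterated_image_def
proof
  fix k
  assume "\<forall>n. tm_image (\<lambda>z. s (2^n * z))"
  then have "tm_image (\<lambda>z. s (2^(n+k) * z))" ..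
  then show "tm_image (\<lambda>z. s (2^n * (2^k * z)))" by (simp add: power_add mult.assoc)
qed

lemma tm_iterated_image_tm_image: "tm_iterated_image s \<Longrightarrow> tm_image s"
  unfolding tm_iterated_image_def by (drule spec[of _ 0]) simp

text \<open>If \<open>y\<close> is odd, the pairs starting at \<open>y\<close> and \<open>y+2\<close> straddle the aligned pairs
  of \<open>s\<close>, and unequal letters in both would force three equal consecutive letters in
  \<open>\<lambda>z. s (2*z)\<close>, which contains an aligned pair among them.\<close>
lemma tm_iterated_image_switches_even:
  assumes s: "tm_iterated_image s" and "s y \<noteq> s (y+1)" and "s (y+2) \<noteq> s (y+3)"
  shows "even y"
proof (rule ccontr)
  assume "odd y"
  then obtain z where y: "y = 2*z+1" by (rule oddE)
  define t where "t z = s (2*z)" for z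
  have s1: "tm_image s" using s by (rule tm_iterated_image_tm_image)
  have t: "tm_image t"
    unfolding t_def using tm_iterated_image_tm_image[OF tm_iterated_image_decimate[OF s, of 1]] by simp
  have "y+1 = 2*(z+1)" "y+2 = 2*(z+1)+1" "y+3 = 2*(z+2)" using y by simp_all
  then have "s y = 1 - t z" "s (y+1) = t (z+1)" "s (y+2) = 1 - t (z+1)" "s (y+3) = t (z+2)"
    unfolding y t_def by (simp_all only: tm_image_odd[OF s1])
  with assms(2,3) tm_image_le1[OF t, of z] tm_image_le1[OF t, of "z+1"] tm_image_le1[OF t, of "z+2"]
  have "t z = t (z+1)" "t (z+1) = t (z+2)" by linarith+
  moreover have "t (2*w) \<noteq> t (2*w+1)" for w using t by (rule tm_image_pair_neq)
  ultimately show False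
  proof (cases "even z")
    case False
    then obtain w where "z = 2*w+1" by (rule oddE)
    then show False using \<open>t (z+1) = t (z+2)\<close> \<open>t (2*(w+1)) \<noteq> t (2*(w+1)+1)\<close>
      by (simp add: algebra_simps)
  next
    case True
    then obtain w where "z = 2*w" by (rule evenE)
    then show False using \<open>t z = t (z+1)\<close> \<open>t (2*w) \<noteq> t (2*w+1)\<close> by simp
  qed
qed

subsection \<open>The two-sided Thue--Morse word\<close>

text \<open>Halving the index of \<open>tm_omega\<close> complements its left half, because
  \<open>\<omega>\<^sub>-\<^sub>2\<^sub>t = \<omega>\<^sub>2\<^sub>t\<^sub>-\<^sub>1 = 1 - \<omega>\<^sub>t\<^sub>-\<^sub>1 = 1 - \<omega>\<^sub>-\<^sub>t\<close>;
  the flag records whether the left half is complemented.\<close>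
definition tm_flip :: "bool \<Rightarrow> int \<Rightarrow> nat" where
  "tm_flip c x =
     (if 0 \<le> x then tm_nat (nat x)
      else if c then 1 - tm_nat (nat (-x) - 1) else tm_nat (nat (-x) - 1))"

lemma tm_omega_eq_tm_flip: "tm_omega = tm_flip False"
  by (rule ext) (simp add: tm_flip_def tm_omega_def)

lemma tm_flip_le1: "tm_flip c x \<le> 1"
  using tm_nat_le1 by (simp add: tm_flip_def)

lemma tm_flip_even: "tm_flip c (2*v) = tm_flip (\<not>c) v"
proof (cases "0 \<le> v")
  case True
  then have "nat (2*v) = 2 * nat v" by simp
  then show ?thesis using True tm_nat_double[of "nat v"] by (simp add: tm_flip_def)
next
  case False
  define t where "t = nat (-v) - 1"
  have "nat (-(2*v)) - 1 = 2*t+1" "nat (-v) - 1 = t" using False by (simp_all add: t_def)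
  then show ?thesis using False tm_nat_double[of t] tm_nat_le1[of t]
    by (auto simp add: tm_flip_def)
qed

lemma tm_flip_odd: "tm_flip c (2*v+1) = 1 - tm_flip c (2*v)"
proof (cases "0 \<le> v")
  case True
  then have "nat (2*v) = 2 * nat v" "nat (2*v+1) = 2 * nat v + 1" by simp_all
  then show ?thesis using True tm_nat_double[of "nat v"] by (simp add: tm_flip_def)
next
  case False
  define t where "t = nat (-v) - 1"
  have "nat (-(2*v)) - 1 = 2*t+1" "nat (-(2*v+1)) - 1 = 2*t" using False by (simp_all add: t_def)
  then show ?thesis using False tm_nat_double[of t] tm_nat_le1[of t]
    by (auto simp add: tm_flip_def)
qed

lemma tm_flip_decimate: "\<exists>c'. (\<lambda>z. tm_flip c (2^n * z)) = tm_flip c'"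
proof (induction n arbitrary: c)
  case (Suc n)
  then obtain c' where c': "(\<lambda>z. tm_flip c (2^n * z)) = tm_flip c'" by blast
  have "tm_flip c (2^Suc n * z) = tm_flip (\<not>c') z" for z
    using fun_cong[OF c', of "2*z"] by (simp add: mult.assoc mult.left_commute[of 2] tm_flip_even)
  then have "(\<lambda>z. tm_flip c (2^Suc n * z)) = tm_flip (\<not>c')" by blast
  then show ?case by blast
qed auto

lemma tm_image_tm_flip: "tm_image (tm_flip c)"
  unfolding tm_image_def using tm_flip_le1 tm_flip_odd by blast

lemma tm_iterated_image_tm_omega: "tm_iterated_image tm_omega"
  unfolding tm_iterated_image_def tm_omega_eq_tm_flip
proof
  fix n
  obtain c' where "(\<lambda>z. tm_flip False (2^n * z)) = tm_flip c'" using tm_flip_decimate by blast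
  then show "tm_image (\<lambda>z. tm_flip False (2^n * z))" using tm_image_tm_flip by simp
qed

subsection \<open>Windows and blocks\<close>

definition window :: "(int \<Rightarrow> nat) \<Rightarrow> int \<Rightarrow> nat \<Rightarrow> nat list" where
  "window s x l = map (\<lambda>j. s (x + int j)) [0..<l]"

lemma length_window[simp]: "length (window s x l) = l"
  by (simp add: window_def)

lemma window_add: "window s x (a+b) = window s x a @ window s (x + int a) b"
  by (induction b) (auto simp: window_def add.assoc)

lemma window_split:
  "a \<le> l \<Longrightarrow> window s x l = window s x a @ window s (x + int a) (l - a)"
  using window_add[of s x a "l-a"] by simp

lemma tm_lang_window: "\<alpha> \<in> tm_lang \<Longrightarrow> \<exists>m. \<alpha> = window tm_omega m (length \<alpha>)"
proof -
  assume "\<alpha> \<in> tm_lang"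
  then obtain m where "\<forall>j < length \<alpha>. \<alpha> ! j = tm_omega (m + int j)" unfolding tm_lang_def by blast
  then have "\<alpha> = window tm_omega m (length \<alpha>)" by (simp add: window_def nth_equalityI)
  then show ?thesis ..
qed

lemma length_tm_block[simp]: "length (tm_block n i) = 2^n"
  by (induction n arbitrary: i) auto

lemma hd_tm_block: "hd (tm_block n i) = i"
proof (induction n arbitrary: i)
  case (Suc n)
  have "tm_block n i \<noteq> []" using length_tm_block[of n i] by (metis list.size(3) power_not_zero zero_neq_numeral)
  then show ?case using Suc by (simp add: hd_append)
qed simp

lemma tm_block_inject: "tm_block n a = tm_block n b \<longleftrightarrow> a = b"
  using hd_tm_block by metis

lemma length_concat_tm_blocks: "length (concat (map (tm_block n) is)) = length is * 2^n"
  by (induction "is") auto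

lemma concat_tm_blocks_inject:
  "length is = length is' \<Longrightarrow> concat (map (tm_block n) is) = concat (map (tm_block n) is') \<Longrightarrow> is = is'"
proof (induction "is" arbitrary: is')
  case (Cons i "is")
  then obtain i' js where "is' = i' # js" by (cases is') auto
  with Cons show ?case by (simp add: append_eq_append_conv tm_block_inject)
qed simp

lemma window_aligned_tm_block:
  assumes "tm_iterated_image s"
  shows "window s (2^n * z) (2^n) = tm_block n (s (2^n * z))"
proof (induction n arbitrary: z)
  case (Suc n)
  have "tm_image (\<lambda>z. s (2^n * z))" using assms unfolding tm_iterated_image_def by blast
  then have odd: "s (2^n * (2*z+1)) = 1 - s (2^n * (2*z))" by (rule tm_image_odd)
  have "(2::nat)^Suc n = 2^n + 2^n" "(2::int)^Suc n * z = 2^n*(2*z)"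
    "(2::int)^n*(2*z) + int (2^n) = 2^n*(2*z+1)" by (simp_all add: algebra_simps)
  then have "window s (2^Suc n * z) (2^Suc n) = window s (2^n*(2*z)) (2^n) @ window s (2^n*(2*z+1)) (2^n)"
    by (simp only: window_add)
  also have "\<dots> = tm_block n (s (2^n*(2*z))) @ tm_block n (1 - s (2^n*(2*z)))"
    using Suc.IH odd by simp
  finally show ?case by (simp add: mult.assoc mult.left_commute[of 2])
qed (simp add: window_def)

lemma window_aligned_tm_blocks:
  assumes "tm_iterated_image s"
  shows "window s (2^n * y) (k * 2^n) = concat (map (tm_block n) (map (\<lambda>j. s (2^n * (y + int j))) [0..<k]))"
proof (induction k arbitrary: y)
  case (Suc k)
  have "window s (2^n * y) (Suc k * 2^n) = window s (2^n * y) (2^n) @ window s (2^n * (y+1)) (k * 2^n)"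
    using window_add[of s "2^n*y" "2^n" "k*2^n"] by (simp add: algebra_simps)
  also have "\<dots> = tm_block n (s (2^n * y)) @ concat (map (tm_block n) (map (\<lambda>j. s (2^n * (y + 1 + int j))) [0..<k]))"
    using window_aligned_tm_block[OF assms] Suc.IH by simp
  also have "\<dots> = concat (map (tm_block n) (map (\<lambda>j. s (2^n * (y + int j))) [0..<Suc k]))"
    by (simp add: upt_conv_Cons map_Suc_upt[symmetric] del: upt_Suc) (simp add: o_def algebra_simps)
  finally show ?case .
qed (simp add: window_def)

subsection \<open>Recognizability\<close>

lemma window_double_split:
  "window s x (2*l) = A @ B \<Longrightarrow> length A = l \<Longrightarrow> window s x l = A \<and> window s (x + int l) l = B"
  using window_add[of s x l l] by (simp add: mult_2)

text \<open>Induction on \<open>n\<close>: two \<open>(n+1)\<close>-blocks are four \<open>n\<close>-blocks \<open>a, 1-a, b, 1-b\<close>, aligned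
  at some \<open>2^n y\<close> by induction, and the two switches force \<open>y\<close> to be even.\<close>
lemma window_two_tm_blocks_aligned:
  assumes s: "tm_iterated_image s"
  shows "window s x (2 * 2^n) = tm_block n a @ tm_block n b \<Longrightarrow> (2::int)^n dvd x"
proof (induction n arbitrary: x a b)
  case (Suc n)
  let ?B = "tm_block n" and ?N = "(2::int)^n"
  from window_double_split[OF Suc.prems]
  have "window s x (2 * 2^n) = ?B a @ ?B (1-a)" "window s (x + 2 * ?N) (2 * 2^n) = ?B b @ ?B (1-b)"
    by simp_all
  moreover from this(1) obtain y where y: "x = ?N * y" using Suc.IH by blast
  ultimately have "window s (?N*y) (2^n) = ?B a" "window s (?N*(y+1)) (2^n) = ?B (1-a)"
    "window s (?N*(y+2)) (2^n) = ?B b" "window s (?N*(y+3)) (2^n) = ?B (1-b)"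
    by (auto dest!: window_double_split simp: algebra_simps)
  then have "s (?N*y) = a" "s (?N*(y+1)) = 1-a" "s (?N*(y+2)) = b" "s (?N*(y+3)) = 1-b"
    unfolding window_aligned_tm_block[OF s] tm_block_inject by simp_all
  then have "even y"
    using tm_iterated_image_switches_even[OF tm_iterated_image_decimate[OF s, of n], of y]
      one_minus_neq_self[of a] one_minus_neq_self[of b] by (simp add: add.assoc)
  then show ?case using y by (auto elim!: evenE simp: mult.assoc)
qed simp

lemma block_decomp_prefix_length:
  assumes s: "tm_iterated_image s" and d: "block_decomp n (window s m L) g0 is g1"
  shows "int (length g0) = (-m) mod 2^n"
proof -
  let ?p = "length g0"
  from d have eq: "window s m L = g0 @ concat (map (tm_block n) is) @ g1"
    and "2 \<le> length is" and p: "?p < 2^n"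
    by (auto simp: block_decomp_def)
  then obtain i1 i2 rest where "is = i1 # i2 # rest"
    by (metis Suc_le_length_iff numeral_2_eq_2)
  with eq have eq': "window s m L = g0 @ (tm_block n i1 @ tm_block n i2) @ concat (map (tm_block n) rest) @ g1"
    by simp
  have L: "?p + 2 * 2^n \<le> L"
    using arg_cong[OF eq', of length] by simp
  have "window s (m + int ?p) (2 * 2^n) = take (2 * 2^n) (drop ?p (window s m L))"
    using window_split[OF L, of s m] window_split[of ?p "?p + 2 * 2^n" s m] by simp
  also have "\<dots> = tm_block n i1 @ tm_block n i2"
    unfolding eq' by simp
  finally have "window s (m + int ?p) (2 * 2^n) = tm_block n i1 @ tm_block n i2" .
  then have "2^n dvd int ?p - (-m)"
    using window_two_tm_blocks_aligned[OF s] by (simp add: add.commute)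
  then have "int ?p mod 2^n = (-m) mod 2^n" by (simp add: mod_eq_dvd_iff)
  moreover have "int ?p mod 2^n = int ?p" using p by (simp add: mod_pos_pos_trivial)
  ultimately show ?thesis by simp
qed

lemma concat_tm_blocks_append_inject:
  assumes eq: "concat (map (tm_block n) is) @ g1 = concat (map (tm_block n) is') @ g1'"
    and "length g1 < 2^n" and "length g1' < 2^n"
  shows "is = is' \<and> g1 = g1'"
proof -
  from eq have "length is * 2^n + length g1 = length is' * 2^n + length g1'"
    by (metis length_concat_tm_blocks length_append)
  then have "(length is * 2^n + length g1) div 2^n = (length is' * 2^n + length g1') div 2^n"
    by simp
  with assms(2,3) have len: "length is = length is'" by simp
  with eq have "concat (map (tm_block n) is) = concat (map (tm_block n) is') \<and> g1 = g1'"
    by (simp add: append_eq_append_conv length_concat_tm_blocks)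
  with len show ?thesis using concat_tm_blocks_inject by blast
qed

lemma block_decomp_unique:
  assumes s: "tm_iterated_image s"
    and d: "block_decomp n (window s m L) g0 is g1" and d': "block_decomp n (window s m L) g0' is' g1'"
  shows "g0 = g0' \<and> is = is' \<and> g1 = g1'"
proof -
  from d d' have "length g0 = length g0'"
    using block_decomp_prefix_length[OF s] by (metis of_nat_eq_iff)
  moreover from d d' have "g0 @ concat (map (tm_block n) is) @ g1 = g0' @ concat (map (tm_block n) is') @ g1'"
    and "length g1 < 2^n" "length g1' < 2^n"
    by (auto simp: block_decomp_def)
  ultimately show ?thesis
    using concat_tm_blocks_append_inject by (metis append_eq_append_conv)
qed

subsection \<open>Choosing the block length\<close>

text \<open>The number \<open>\<lfloor>(m+L)/2^n\<rfloor> - \<lceil>m/2^n\<rceil>\<close> of complete aligned \<open>2^n\<close>-blocks inside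
  the window \<open>[m, m+L)\<close>.\<close>
definition aligned_block_count :: "int \<Rightarrow> nat \<Rightarrow> nat \<Rightarrow> int" where
  "aligned_block_count m L n = (m + int L) div 2^n + (-m) div 2^n"

lemma aligned_block_count_le: "aligned_block_count m L n \<le> int L div 2^n"
proof -
  have "(m + int L) mod 2^n + (-m) mod 2^n \<ge> 0" by simp
  then have "((m + int L) mod 2^n + (-m) mod 2^n) div 2^n \<ge> 0" by (simp add: div_int_pos_iff)
  then show ?thesis
    unfolding aligned_block_count_def using div_add1_eq[of "m + int L" "-m" "2^n"] by simp
qed

lemma aligned_block_count_Suc_ge:
  assumes "5 \<le> aligned_block_count m L n"
  shows "2 \<le> aligned_block_count m L (Suc n)"
proof -
  have halve: "x div 2^Suc n = (x div 2^n) div 2" for x :: int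
    by (subst power_Suc2, rule zdiv_zmult2_eq) simp
  have "5 \<le> a + b \<Longrightarrow> 2 \<le> a div 2 + b div 2" for a b :: int by presburger
  then show ?thesis using assms unfolding aligned_block_count_def halve by blast
qed

text \<open>The count starts at \<open>L \<ge> 2\<close>, eventually vanishes, and at least halves (up to
  rounding) in each step, so it takes a value in \<open>{2,3,4}\<close>.\<close>
lemma exists_aligned_block_count:
  assumes L: "2 \<le> L"
  shows "\<exists>n. 2 \<le> aligned_block_count m L n \<and> aligned_block_count m L n \<le> 4"
proof -
  have "aligned_block_count m L L \<le> int L div 2^L" by (rule aligned_block_count_le)
  also have "\<dots> = 0" using less_exp[of L] by (simp add: div_pos_pos_trivial)
  finally have ex: "aligned_block_count m L L \<le> 4" by simp
  define n0 where "n0 = (LEAST n. aligned_block_count m L n \<le> 4)"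
  have le4: "aligned_block_count m L n0 \<le> 4" unfolding n0_def by (rule LeastI[of _ L]) (rule ex)
  show ?thesis
  proof (cases n0)
    case 0
    then show ?thesis using le4 L by (intro exI[of _ n0]) (simp add: aligned_block_count_def)
  next
    case (Suc k)
    then have "\<not> aligned_block_count m L k \<le> 4"
      using not_less_Least[of k "\<lambda>n. aligned_block_count m L n \<le> 4"] n0_def by simp
    then show ?thesis using aligned_block_count_Suc_ge[of m L k] Suc le4 by auto
  qed
qed

lemma window_alignment:
  assumes "2 \<le> L"
  shows "\<exists>n p k r y. L = p + k * 2^n + r \<and> m + int p = 2^n * y \<and>
           p < 2^n \<and> r < 2^n \<and> 2 \<le> k \<and> k \<le> 4"
proof -
  obtain n where n: "2 \<le> aligned_block_count m L n" "aligned_block_count m L n \<le> 4"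
    using exists_aligned_block_count[OF assms] by blast
  define N where "N = (2::int)^n"
  define y where "y = - ((-m) div N)"
  define p where "p = nat ((-m) mod N)"
  define r where "r = nat ((m + int L) mod N)"
  define k where "k = nat (aligned_block_count m L n)"
  have N: "N > 0" "int (2^n) = N" unfolding N_def by simp_all
  have ip: "int p = (-m) mod N" and ir: "int r = (m + int L) mod N"
    and ik: "int k = (m + int L) div N - y"
    using N n unfolding p_def r_def k_def y_def N_def aligned_block_count_def by simp_all
  have "(-m) mod N < N" "(m + int L) mod N < N" using N by simp_all
  moreover have "N * ((-m) div N) + (-m) mod N = -m" "N * ((m + int L) div N) + (m + int L) mod N = m + int L"
    by (rule mult_div_mod_eq)+
  moreover have "2 \<le> int k" "int k \<le> 4"
    using n ik unfolding aligned_block_count_def y_def N_def by simp_all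
  moreover have "int (k * 2^n) = N * ((m + int L) div N) - N * y"
    using N(2) unfolding of_nat_mult ik by (simp add: right_diff_distrib mult.commute)
  moreover have "N * y = - (N * ((-m) div N))" unfolding y_def by simp
  ultimately have "int L = int p + int (k * 2^n) + int r" "m + int p = N * y"
    "int p < N" "int r < N" "2 \<le> k" "k \<le> 4"
    using ip ir by linarith+
  then have "L = p + k * 2^n + r" "m + int p = 2^n * y" "p < 2^n" "r < 2^n" "2 \<le> k" "k \<le> 4"
    unfolding N(2)[symmetric] by (simp_all only: of_nat_add[symmetric] of_nat_eq_iff of_nat_less_iff)
      (simp_all add: N_def)
  then show ?thesis by blast
qed

lemma window_block_decomp:
  assumes s: "tm_iterated_image s" and y: "m + int p = 2^n * y"
    and p: "p < 2^n" and r: "r < 2^n" and k: "2 \<le> k" "k \<le> 4"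
  shows "block_decomp n (window s m (p + k * 2^n + r)) (window s m p)
           (map (\<lambda>j. s (2^n * (y + int j))) [0..<k]) (window s (2^n * (y + int k)) r)"
proof -
  have bit: "s x \<in> {0, 1}" for x
    using tm_image_le1[OF tm_iterated_image_tm_image[OF s]] by (simp add: le_Suc_eq)
  have "(2::int)^n * y + int (k * 2^n) = 2^n * (y + int k)" by (simp add: algebra_simps)
  then have "window s m (p + k * 2^n + r) = window s m p @ window s (2^n * y) (k * 2^n) @ window s (2^n * (y + int k)) r"
    unfolding add.assoc[of p] window_add y by simp
  then have split: "window s m (p + k * 2^n + r) =
      window s m p @ concat (map (tm_block n) (map (\<lambda>j. s (2^n * (y + int j))) [0..<k])) @ window s (2^n * (y + int k)) r"
    by (simp add: window_aligned_tm_blocks[OF s])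
  have "2^n * (y - 1) + int (2^n - p) = m"
    using y p by (simp add: algebra_simps of_nat_diff)
  moreover have "2^n - (2^n - p) = p" using p by simp
  ultimately have "tm_block n (s (2^n * (y - 1))) = window s (2^n * (y - 1)) (2^n - p) @ window s m p"
    using window_split[of "2^n - p" "2^n" s "2^n * (y - 1)"] by (simp add: window_aligned_tm_block[OF s])
  then have "suffix (window s m p) (tm_block n (s (2^n * (y - 1))))"
    unfolding suffix_def by blast
  then have g0: "\<exists>i\<in>{0,1}. suffix (window s m p) (tm_block n i)" using bit by blast
  moreover have "tm_block n (s (2^n * (y + int k))) =
      window s (2^n * (y + int k)) r @ window s (2^n * (y + int k) + int r) (2^n - r)"
    using window_split[of r "2^n" s "2^n * (y + int k)"] r by (simp add: window_aligned_tm_block[OF s])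
  then have "prefix (window s (2^n * (y + int k)) r) (tm_block n (s (2^n * (y + int k))))"
    unfolding prefix_def by blast
  then have g1: "\<exists>i\<in>{0,1}. prefix (window s (2^n * (y + int k)) r) (tm_block n i)" using bit by blast
  have "set (map (\<lambda>j. s (2^n * (y + int j))) [0..<k]) \<subseteq> {0, 1}"
    unfolding set_map by (rule image_subsetI) (rule bit)
  with g0 g1 split p r k show ?thesis
    unfolding block_decomp_def by simp
qed

theorem proposition3p5:
  fixes \<alpha> :: "nat list"
  assumes "\<alpha> \<in> tm_lang" and "2 \<le> length \<alpha>"
  shows "(\<exists>n g0 is g1. block_decomp n \<alpha> g0 is g1) \<and>
         (\<forall>n g0 is g1 g0' is' g1'.
             block_decomp n \<alpha> g0 is g1 \<and> block_decomp n \<alpha> g0' is' g1' \<longrightarrow>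
             g0 = g0' \<and> is = is' \<and> g1 = g1')"
proof
  obtain m where \<alpha>: "\<alpha> = window tm_omega m (length \<alpha>)"
    using tm_lang_window[OF assms(1)] by blast
  obtain n p k r y where L: "length \<alpha> = p + k * 2^n + r" and "m + int p = 2^n * y"
    "p < 2^n" "r < 2^n" "2 \<le> k" "k \<le> 4"
    using window_alignment[OF assms(2)] by blast
  then show "\<exists>n g0 is g1. block_decomp n \<alpha> g0 is g1"
    using window_block_decomp[OF tm_iterated_image_tm_omega] \<alpha> by (metis L)
  show "\<forall>n g0 is g1 g0' is' g1'.
      block_decomp n \<alpha> g0 is g1 \<and> block_decomp n \<alpha> g0' is' g1' \<longrightarrow> g0 = g0' \<and> is = is' \<and> g1 = g1'"
    using block_decomp_unique[OF tm_iterated_image_tm_omega] \<alpha> by metis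
qed

end
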